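(* Let $k$ be a positive integer and $n_0,\ldots,n_{k-1}$ positive integers, with indices read modulo $k$. For each $j\in\{0,\ldots,k-1\}$ let $A^{(j)}$ be a real $n_j\times n_{j+1}$ matrix. Suppose the signed digraph $G_{A^{(0)}A^{(1)}\cdots A^{(k-1)}}$ contains an e-cycle. Then there exist matrices in $\mathcal{Q}(A^{(0)})\mathcal{Q}(A^{(1)})\cdots\mathcal{Q}(A^{(k-1)})$ which are not $P_0$-matrices.
   Context: Indices $j$ are taken modulo $k$. For a real matrix $M$, $\mathcal{Q}(M)$ is the set of real matrices $X$ of the same dimensions with $M_{ij}>0\Rightarrow X_{ij}>0$, $M_{ij}<0\Rightarrow X_{ij}<0$, $M_{ij}=0\Rightarrow X_{ij}=0$, and $\mathcal{Q}(A^{(0)})\cdots\mathcal{Q}(A^{(k-1)})=\{B^{(0)}\cdots B^{(k-1)} : B^{(j)}\in\mathcal{Q}(A^{(j)})\}$. The signed digraph $G=G_{A^{(0)}\cdots A^{(k-1)}}$ has vertex set the disjoint union of $V_0,\ldots,V_{k-1}$ with $V_j=\{V_j^1,\ldots,V_j^{n_j}\}$; there is a directed edge from $V_j^r$ to $V_{j+1}^s$ iff $(A^{(j)})_{rs}\neq 0$, with the sign of $(A^{(j)})_{rs}$; no other edges (loops allowed when $k=1$). A cycle means a directed cycle; every cycle has length a multiple of $k$. A cycle with $kr_1$ edges, $r_2$ of them negative, is an e-cycle if $(-1)^{r_1+r_2}=1$ and an o-cycle otherwise. A $P_0$-matrix is a real square matrix all of whose principal minors are nonnegative. *)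

theory Defs
  imports "Jordan_Normal_Form.Determinant" "Jordan_Normal_Form.DL_Submatrix"
begin

definition qual_class :: "real mat \<Rightarrow> real mat set" where
  "qual_class M = {X. dim_row X = dim_row M \<and> dim_col X = dim_col M \<and>
     (\<forall>i j. i < dim_row M \<longrightarrow> j < dim_col M \<longrightarrow> sgn (X $$ (i,j)) = sgn (M $$ (i,j)))}"

definition P0_matrix :: "real mat \<Rightarrow> bool" where
  "P0_matrix M \<longleftrightarrow> dim_row M = dim_col M \<and>
     (\<forall>I. I \<subseteq> {0..<dim_row M} \<longrightarrow> det (submatrix M I I) \<ge> 0)"

definition cyc_prod :: "nat \<Rightarrow> nat \<Rightarrow> (nat \<Rightarrow> real mat) \<Rightarrow> real mat" where
  "cyc_prod n0 k B = foldl (\<lambda>P j. P * B j) (1\<^sub>m n0) [0..<k]"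

text \<open>Signed digraph G_{A(0)...A(k-1)}: vertices (j,r) with j<k, r<n j;
  edge (j,r) -> (j',s) iff j' = (j+1) mod k and A j (r,s) is nonzero.\<close>
definition vert :: "nat \<Rightarrow> (nat \<Rightarrow> nat) \<Rightarrow> nat \<times> nat \<Rightarrow> bool" where
  "vert k n v \<longleftrightarrow> fst v < k \<and> snd v < n (fst v)"

definition edge :: "nat \<Rightarrow> (nat \<Rightarrow> nat) \<Rightarrow> (nat \<Rightarrow> real mat) \<Rightarrow> nat \<times> nat \<Rightarrow> nat \<times> nat \<Rightarrow> bool" where
  "edge k n A v w \<longleftrightarrow> vert k n v \<and> vert k n w \<and> fst w = (fst v + 1) mod k \<and>
     A (fst v) $$ (snd v, snd w) \<noteq> 0"

definition is_cycle :: "nat \<Rightarrow> (nat \<Rightarrow> nat) \<Rightarrow> (nat \<Rightarrow> real mat) \<Rightarrow> (nat \<times> nat) list \<Rightarrow> bool" where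
  "is_cycle k n A c \<longleftrightarrow> c \<noteq> [] \<and> distinct c \<and>
     (\<forall>i < length c. edge k n A (c ! i) (c ! ((i + 1) mod length c)))"

definition neg_edges :: "(nat \<Rightarrow> real mat) \<Rightarrow> (nat \<times> nat) list \<Rightarrow> nat" where
  "neg_edges A c = card {i. i < length c \<and>
     A (fst (c ! i)) $$ (snd (c ! i), snd (c ! ((i + 1) mod length c))) < 0}"

text \<open>e-cycle: kr1 edges (r1 = length/k), r2 negative edges, (-1)^(r1+r2) = 1.\<close>
definition is_e_cycle :: "nat \<Rightarrow> (nat \<Rightarrow> nat) \<Rightarrow> (nat \<Rightarrow> real mat) \<Rightarrow> (nat \<times> nat) list \<Rightarrow> bool" where
  "is_e_cycle k n A c \<longleftrightarrow> is_cycle k n A c \<and>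
     (-1::int) ^ (length c div k + neg_edges A c) = 1"

end

theory Submission
  imports Defs
begin

text \<open>Keep the entries of \<open>A\<^sup>(\<^sup>j\<^sup>)\<close> on the edges of the e-cycle at their signs and scale all
  other entries by \<open>\<epsilon> > 0\<close>. For \<open>\<epsilon> = 0\<close> the product, restricted to the \<open>r\<^sub>1\<close> vertices where
  the cycle passes through \<open>V\<^sub>0\<close>, is a weighted permutation matrix of the cyclic shift of these
  passages, the weights being the signs of the \<open>k\<close>-edge segments between consecutive passages.
  Its determinant is \<open>(-1)^(r\<^sub>1 - 1) * (-1)^r\<^sub>2 = -1\<close> precisely because the cycle is an e-cycle.
  This principal minor depends continuously on \<open>\<epsilon>\<close>, so it stays negative for some \<open>\<epsilon> > 0\<close>.\<close>

lemma add_mod_cancel_left_nat: "((s::nat) + a) mod m = (s + b) mod m \<longleftrightarrow> a mod m = b mod m"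
proof
  assume "(s + a) mod m = (s + b) mod m"
  then show "a mod m = b mod m"
    using nat_mod_eq_iff by auto
qed (metis mod_add_right_eq)

lemma prod_lessThan_add_mod:
  fixes f :: "nat \<Rightarrow> 'a::comm_monoid_mult"
  shows "(\<Prod>l<m. f ((t + l) mod m)) = (\<Prod>i<m. f i)"
proof (cases "m = 0")
  case False
  have "inj_on (\<lambda>l. (t + l) mod m) {..<m}"
    by (rule inj_onI) (simp add: add_mod_cancel_left_nat)
  moreover have "(\<lambda>l. (t + l) mod m) ` {..<m} \<subseteq> {..<m}"
    using False by auto
  ultimately have "bij_betw (\<lambda>l. (t + l) mod m) {..<m} {..<m}"
    by (simp add: bij_betw_def endo_inj_surj)
  then show ?thesis by (rule prod.reindex_bij_betw)
qed simp

lemma prod_sgn_eq_power_card_neg: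
  fixes x :: "'i \<Rightarrow> real"
  assumes "finite I" and "\<And>i. i \<in> I \<Longrightarrow> x i \<noteq> 0"
  shows "(\<Prod>i\<in>I. sgn (x i)) = (-1) ^ card {i\<in>I. x i < 0}"
proof -
  have "(\<Prod>i\<in>I. sgn (x i)) = (\<Prod>i\<in>I. if x i < 0 then -1 else 1)"
    using assms(2) by (intro prod.cong) (auto simp: sgn_real_def)
  also have "\<dots> = (-1) ^ card {i\<in>I. x i < 0}"
    by (subst prod.inter_filter[OF assms(1), symmetric]) simp
  finally show ?thesis .
qed

definition cyclic_shift :: "nat \<Rightarrow> nat \<Rightarrow> nat" where
  "cyclic_shift r a = (if a < r then Suc a mod r else a)"

lemma cyclic_shift_Suc: "cyclic_shift (Suc r) = Transposition.transpose 0 r \<circ> cyclic_shift r"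
  by (auto simp: fun_eq_iff cyclic_shift_def Transposition.transpose_def mod_Suc)

lemma cyclic_shift_permutes: "cyclic_shift r permutes {..<r}"
proof (induction r)
  case 0
  have "cyclic_shift 0 = id" by (auto simp: fun_eq_iff cyclic_shift_def)
  then show ?case by (metis permutes_id)
next
  case (Suc r)
  have "cyclic_shift r permutes {..<Suc r}"
    using Suc permutes_subset by fastforce
  moreover have "Transposition.transpose 0 r permutes {..<Suc r}"
    by (rule permutes_swap_id) auto
  ultimately show ?case
    unfolding cyclic_shift_Suc by (rule permutes_compose)
qed

lemma sign_cyclic_shift: "sign (cyclic_shift (Suc r)) = (-1) ^ r"
proof (induction r)
  case 0
  have "cyclic_shift 1 = id" by (auto simp: fun_eq_iff cyclic_shift_def)
  then show ?case by simp
next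
  case (Suc r)
  have "permutation (cyclic_shift (Suc r))"
    using cyclic_shift_permutes permutation_permutes by blast
  then show ?case
    unfolding cyclic_shift_Suc[of "Suc r"]
    by (subst sign_compose[OF permutation_swap_id]) (simp_all add: sign_swap_id Suc)
qed

lemma det_monomial_mat:
  fixes M :: "'a::comm_ring_1 mat"
  assumes M: "M \<in> carrier_mat r r" and p: "p permutes {..<r}"
    and off: "\<And>i j. i < r \<Longrightarrow> j < r \<Longrightarrow> j \<noteq> p i \<Longrightarrow> M $$ (i, j) = 0"
  shows "det M = signof p * (\<Prod>i<r. M $$ (i, p i))"
proof -
  have vanish: "(\<Prod>i = 0..<r. M $$ (i, q i)) = 0" if q: "q permutes {0..<r}" "q \<noteq> p" for q
  proof -
    obtain i where i: "q i \<noteq> p i" using q(2) by auto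
    then have "i < r"
      using p q(1) by (metis atLeast0LessThan lessThan_iff permutes_not_in)
    moreover have "q i < r"
      using q(1) \<open>i < r\<close> by (simp add: permutes_in_image)
    ultimately have "M $$ (i, q i) = 0"
      using off i by blast
    then show ?thesis
      using \<open>i < r\<close> by (intro prod_zero) auto
  qed
  have "det M = (\<Sum>q\<in>{q. q permutes {0..<r}}.
      if q = p then signof p * (\<Prod>i = 0..<r. M $$ (i, p i)) else 0)"
    unfolding det_def'[OF M] by (intro sum.cong) (auto simp: vanish)
  also have "\<dots> = signof p * (\<Prod>i<r. M $$ (i, p i))"
    using p by (simp add: finite_permutations atLeast0LessThan)
  finally show ?thesis .
qed

lemma det_submatrix_monomial:
  fixes P :: "'a::comm_ring_1 mat"
  assumes P: "P \<in> carrier_mat N N"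
    and u: "inj_on u {..<r}" "u ` {..<r} \<subseteq> {..<N}"
    and \<sigma>: "\<sigma> permutes {..<r}"
    and entries: "\<And>a b. a < r \<Longrightarrow> b < r \<Longrightarrow> P $$ (u a, u b) = (if b = \<sigma> a then w a else 0)"
  shows "det (submatrix P (u ` {..<r}) (u ` {..<r})) = signof \<sigma> * (\<Prod>a<r. w a)"
proof -
  define S where "S = u ` {..<r}"
  define M where "M = submatrix P S S"
  \<comment> \<open>the rank of \<open>u a\<close> in \<open>S\<close>, i.e. the row of \<open>M\<close> that is row \<open>u a\<close> of \<open>P\<close>\<close>
  define h where "h a = card {s\<in>S. s < u a}" for a
  have card_S: "card S = r"
    using u(1) by (simp add: S_def card_image)
  have S_eq: "{i. i < N \<and> i \<in> S} = S"
    using u(2) by (auto simp: S_def)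
  have M: "M \<in> carrier_mat r r"
    using carrier_matD[OF P] unfolding M_def
    by (intro carrier_matI) (simp_all only: dim_submatrix S_eq card_S)
  have M_h: "M $$ (h a, h b) = P $$ (u a, u b)" if "a < r" "b < r" for a b
    unfolding M_def h_def using P that u(2) by (intro submatrix_index_card) (auto simp: S_def)
  have "h a < r" if "a < r" for a
  proof -
    have "{s\<in>S. s < u a} \<subset> S"
      using that by (auto simp: S_def)
    then show ?thesis
      unfolding h_def card_S[symmetric] by (rule psubset_card_mono[rotated]) (simp add: S_def)
  qed
  moreover have "inj_on h {..<r}"
  proof (rule inj_onI)
    fix a b assume ab: "a \<in> {..<r}" "b \<in> {..<r}" "h a = h b"
    have "pick S (h a) = u a" if "a < r" for a
      unfolding h_def using that by (intro pick_card_in_set) (simp add: S_def)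
    then have "u a = u b"
      using ab by (metis lessThan_iff)
    then show "a = b"
      using u(1) ab by (meson inj_onD)
  qed
  ultimately have h: "bij_betw h {..<r} {..<r}"
    by (simp add: bij_betw_def endo_inj_surj image_subset_iff)
  define p where "p = map_permutation {..<r} h \<sigma>"
  have p: "p permutes {..<r}"
    unfolding p_def using h \<sigma> by (rule map_permutation_permutes)
  have p_h: "p (h a) = h (\<sigma> a)" if "a < r" for a
    unfolding p_def using h that by (simp add: bij_betw_def map_permutation_apply)
  have \<sigma>_lt: "a < r \<Longrightarrow> \<sigma> a < r" for a
    using permutes_in_image[OF \<sigma>, of a] by simp
  have "det M = signof p * (\<Prod>i<r. M $$ (i, p i))"
  proof (rule det_monomial_mat[OF M p])
    fix i j assume "i < r" "j < r" "j \<noteq> p i"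
    moreover obtain a b where "a < r" "b < r" "i = h a" "j = h b"
      using h \<open>i < r\<close> \<open>j < r\<close> by (metis bij_betw_def imageE lessThan_iff)
    ultimately show "M $$ (i, j) = 0"
      using M_h entries p_h by auto
  qed
  also have "(\<Prod>i<r. M $$ (i, p i)) = (\<Prod>a<r. M $$ (h a, p (h a)))"
    using prod.reindex_bij_betw[OF h, of "\<lambda>i. M $$ (i, p i)"] by simp
  also have "\<dots> = (\<Prod>a<r. w a)"
    using M_h entries p_h \<sigma>_lt by (intro prod.cong) auto
  also have "sign p = sign \<sigma>"
    unfolding p_def using h \<sigma> by (simp add: bij_betw_def sign_map_permutation)
  finally show ?thesis by (simp add: M_def S_def)
qed

lemma cyc_prod_Suc: "cyc_prod n0 (Suc l) B = cyc_prod n0 l B * B l"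
  by (simp add: cyc_prod_def)

lemma cyc_prod_carrier:
  assumes "\<And>j. j < l \<Longrightarrow> B j \<in> carrier_mat (d j) (d (Suc j))"
  shows "cyc_prod (d 0) l B \<in> carrier_mat (d 0) (d l)"
  using assms
proof (induction l)
  case 0
  then show ?case by (simp add: cyc_prod_def)
next
  case (Suc l)
  then show ?case
    unfolding cyc_prod_Suc by (intro mult_carrier_mat) auto
qed

lemma cyc_prod_Suc_index:
  assumes "\<And>j. j \<le> l \<Longrightarrow> B j \<in> carrier_mat (d j) (d (Suc j))"
    and "i < d 0" "y < d (Suc l)"
  shows "cyc_prod (d 0) (Suc l) B $$ (i, y) = (\<Sum>t = 0..<d l. cyc_prod (d 0) l B $$ (i, t) * B l $$ (t, y))"
proof -
  have "cyc_prod (d 0) l B \<in> carrier_mat (d 0) (d l)"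
    using assms(1) by (intro cyc_prod_carrier) auto
  moreover have "B l \<in> carrier_mat (d l) (d (Suc l))"
    using assms(1) by simp
  ultimately show ?thesis
    unfolding cyc_prod_Suc using assms(2,3) by (simp add: scalar_prod_def)
qed

lemma continuous_on_cyc_prod_entry:
  fixes B :: "'a::topological_space \<Rightarrow> nat \<Rightarrow> real mat"
  assumes carrier: "\<And>x j. j < l \<Longrightarrow> B x j \<in> carrier_mat (d j) (d (Suc j))"
    and cont: "\<And>j s t. j < l \<Longrightarrow> s < d j \<Longrightarrow> t < d (Suc j) \<Longrightarrow> continuous_on UNIV (\<lambda>x. B x j $$ (s, t))"
    and "i < d 0" "y < d l"
  shows "continuous_on UNIV (\<lambda>x. cyc_prod (d 0) l (B x) $$ (i, y))"
  using carrier cont \<open>y < d l\<close>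
proof (induction l arbitrary: y)
  case 0
  then show ?case
    using \<open>i < d 0\<close> by (simp add: cyc_prod_def continuous_on_const)
next
  case (Suc l)
  have "cyc_prod (d 0) (Suc l) (B x) $$ (i, y) =
      (\<Sum>t = 0..<d l. cyc_prod (d 0) l (B x) $$ (i, t) * B x l $$ (t, y))" for x
    using Suc.prems \<open>i < d 0\<close> by (intro cyc_prod_Suc_index) auto
  then show ?case
    using Suc by (auto intro!: continuous_on_sum continuous_on_mult)
qed

lemma continuous_on_det:
  fixes M :: "'a::topological_space \<Rightarrow> real mat"
  assumes "\<And>x. M x \<in> carrier_mat q q"
    and "\<And>i j. i < q \<Longrightarrow> j < q \<Longrightarrow> continuous_on UNIV (\<lambda>x. M x $$ (i, j))"
  shows "continuous_on UNIV (\<lambda>x. det (M x))"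
proof -
  have det_eq: "(\<lambda>x. det (M x)) =
      (\<lambda>x. \<Sum>p\<in>{p. p permutes {0..<q}}. signof p * (\<Prod>i = 0..<q. M x $$ (i, p i)))"
    by (rule ext) (rule det_def'[OF assms(1)])
  show ?thesis
    unfolding det_eq
  proof (intro continuous_on_sum continuous_on_mult continuous_on_const continuous_on_prod)
    fix p i assume "p \<in> {p. p permutes {0..<q}}" "i \<in> {0..<q}"
    then show "continuous_on UNIV (\<lambda>x. M x $$ (i, p i))"
      using assms(2)[of i "p i"] permutes_in_image[of p "{0..<q}" i] by simp
  qed
qed

lemma continuous_on_det_submatrix:
  fixes P :: "'a::topological_space \<Rightarrow> real mat"
  assumes P: "\<And>x. P x \<in> carrier_mat N N"
    and cont: "\<And>i j. i < N \<Longrightarrow> j < N \<Longrightarrow> continuous_on UNIV (\<lambda>x. P x $$ (i, j))"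
  shows "continuous_on UNIV (\<lambda>x. det (submatrix (P x) I I))"
proof (rule continuous_on_det)
  let ?q = "card {i. i < N \<and> i \<in> I}"
  show "submatrix (P x) I I \<in> carrier_mat ?q ?q" for x
    using carrier_matD[OF P[of x]] by (intro carrier_matI) (simp_all only: dim_submatrix)
  fix i j assume ij: "i < ?q" "j < ?q"
  have "submatrix (P x) I I $$ (i, j) = P x $$ (pick I i, pick I j)" for x
    using carrier_matD[OF P[of x]] ij by (intro submatrix_index) (simp_all only:)
  then show "continuous_on UNIV (\<lambda>x. submatrix (P x) I I $$ (i, j))"
    using cont[OF pick_le[OF ij(1)] pick_le[OF ij(2)]] by simp
qed

locale e_cycle =
  fixes k :: nat and n :: "nat \<Rightarrow> nat" and A :: "nat \<Rightarrow> real mat" and c :: "(nat \<times> nat) list"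
  assumes k_pos: "0 < k"
    and dim_A: "\<And>j. j < k \<Longrightarrow> A j \<in> carrier_mat (n j) (n (Suc j mod k))"
    and e_cycle: "is_e_cycle k n A c"
begin

abbreviation m :: nat where "m \<equiv> length c"

lemma cycle: "c \<noteq> []" "distinct c" "\<And>i. i < m \<Longrightarrow> edge k n A (c ! i) (c ! (Suc i mod m))"
  using e_cycle by (auto simp: is_e_cycle_def is_cycle_def)

lemma length_pos: "0 < m"
  using cycle(1) by simp

lemma fst_nth_0_lt: "fst (c ! 0) < k"
  using cycle(3)[OF length_pos] by (simp add: edge_def vert_def)

lemma fst_nth_mod: "fst (c ! (l mod m)) = (fst (c ! 0) + l) mod k"
proof (induction l)
  case 0
  show ?case using fst_nth_0_lt by simp
next
  case (Suc l)
  have "c ! (Suc l mod m) = c ! (Suc (l mod m) mod m)"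
    by (simp add: mod_Suc_eq)
  then have "fst (c ! (Suc l mod m)) = Suc (fst (c ! (l mod m))) mod k"
    using cycle(3)[of "l mod m"] length_pos by (simp add: edge_def)
  then show ?case
    using Suc by (simp add: mod_Suc_eq)
qed

lemma k_dvd_length: "k dvd m"
proof -
  have "fst (c ! (m mod m)) = fst (c ! (0 mod m))"
    by simp
  then have "(fst (c ! 0) + m) mod k = (fst (c ! 0) + 0) mod k"
    by (simp only: fst_nth_mod)
  then show ?thesis
    unfolding add_mod_cancel_left_nat by (simp add: dvd_eq_mod_eq_0)
qed

definition r :: nat where "r = m div k"

lemma length_eq: "m = r * k"
  using k_dvd_length by (simp add: r_def)

lemma r_pos: "0 < r"
  using length_pos unfolding length_eq by simp

text \<open>The cycle traversed forever, started at a vertex of \<open>V\<^sub>0\<close>.\<close>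
definition walk :: "nat \<Rightarrow> nat \<times> nat" where
  "walk l = c ! ((k - fst (c ! 0) + l) mod m)"

lemma walk_edge: "edge k n A (walk l) (walk (Suc l))"
  using cycle(3)[of "(k - fst (c ! 0) + l) mod m"] length_pos by (simp add: walk_def mod_Suc_eq)

lemma vert_walk: "snd (walk l) < n (fst (walk l))"
  using walk_edge[of l] by (simp add: edge_def vert_def)

lemma fst_walk: "fst (walk l) = l mod k"
proof -
  have "fst (c ! 0) + (k - fst (c ! 0) + l) = k + l"
    using fst_nth_0_lt by simp
  then show ?thesis
    using fst_nth_mod[of "k - fst (c ! 0) + l"] by (simp add: walk_def)
qed

lemma walk_eq_iff: "walk l = walk l' \<longleftrightarrow> l mod m = l' mod m"
  unfolding walk_def using cycle(2) length_pos
  by (simp add: nth_eq_iff_index_eq add_mod_cancel_left_nat)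

definition visit :: "nat \<Rightarrow> nat" where
  "visit a = snd (walk (a * k))"

definition visits :: "nat set" where
  "visits = visit ` {..<r}"

lemma walk_visit: "walk (a * k) = (0, visit a)"
  using fst_walk[of "a * k"] by (simp add: visit_def prod_eq_iff)

lemma visit_lt: "visit a < n 0"
  using vert_walk[of "a * k"] by (simp add: walk_visit)

lemma inj_on_visit: "inj_on visit {..<r}"
proof (rule inj_onI)
  fix a b assume "a \<in> {..<r}" "b \<in> {..<r}" "visit a = visit b"
  then have "(a * k) mod m = (b * k) mod m" "a * k < m" "b * k < m"
    using walk_eq_iff[of "a * k" "b * k"] walk_visit length_eq k_pos by auto
  then show "a = b"
    using k_pos by simp
qed

lemma walk_next_visit:
  assumes "a < r"
  shows "walk (a * k + k) = walk (cyclic_shift r a * k)"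
proof -
  have "(a * k + k) mod (r * k) = (Suc a * k) mod (r * k)"
    by (simp add: add.commute)
  also have "\<dots> = (Suc a mod r) * k"
    by (rule mod_mult_mult2)
  finally show ?thesis
    unfolding walk_eq_iff length_eq cyclic_shift_def using assms by simp
qed

definition edge_sign :: "nat \<Rightarrow> real" where
  "edge_sign l = sgn (A (fst (walk l)) $$ (snd (walk l), snd (walk (Suc l))))"

lemma prod_edge_sign: "(\<Prod>l<m. edge_sign l) = (-1) ^ neg_edges A c"
proof -
  define x where "x i = A (fst (c ! i)) $$ (snd (c ! i), snd (c ! (Suc i mod m)))" for i
  have "edge_sign l = sgn (x ((k - fst (c ! 0) + l) mod m))" for l
    unfolding edge_sign_def x_def walk_def by (simp add: mod_Suc_eq)
  then have "(\<Prod>l<m. edge_sign l) = (\<Prod>i<m. sgn (x i))"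
    using prod_lessThan_add_mod[of "\<lambda>i. sgn (x i)"] by simp
  also have "\<dots> = (-1) ^ card {i\<in>{..<m}. x i < 0}"
    using cycle(3) by (intro prod_sgn_eq_power_card_neg) (auto simp: x_def edge_def)
  also have "{i\<in>{..<m}. x i < 0} = {i. i < m \<and> x i < 0}"
    by auto
  finally show ?thesis
    by (simp add: neg_edges_def x_def)
qed

definition on_walk :: "nat \<Rightarrow> nat \<Rightarrow> nat \<Rightarrow> bool" where
  "on_walk j x y \<longleftrightarrow> (\<exists>l. walk l = (j, x) \<and> snd (walk (Suc l)) = y)"

lemma on_walk_iff: "on_walk (fst (walk l)) (snd (walk l)) y \<longleftrightarrow> y = snd (walk (Suc l))"
proof
  assume "on_walk (fst (walk l)) (snd (walk l)) y"
  then obtain l' where "walk l' = walk l" "snd (walk (Suc l')) = y"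
    by (auto simp: on_walk_def)
  then show "y = snd (walk (Suc l))"
    by (metis walk_eq_iff mod_Suc_eq)
qed (metis on_walk_def prod.collapse)

definition perturbed :: "real \<Rightarrow> nat \<Rightarrow> real mat" where
  "perturbed \<epsilon> j = mat (n j) (n (Suc j mod k))
     (\<lambda>(x, y). (if on_walk j x y then 1 else \<epsilon>) * sgn (A j $$ (x, y)))"

lemma perturbed_qual_class: "0 < \<epsilon> \<Longrightarrow> j < k \<Longrightarrow> perturbed \<epsilon> j \<in> qual_class (A j)"
  using dim_A[of j] by (auto simp: qual_class_def perturbed_def sgn_mult)

lemma perturbed_carrier: "j < k \<Longrightarrow> perturbed \<epsilon> j \<in> carrier_mat (n (j mod k)) (n (Suc j mod k))"
  by (simp add: perturbed_def)

lemma cyc_prod_perturbed_carrier: "cyc_prod (n 0) k (perturbed \<epsilon>) \<in> carrier_mat (n 0) (n 0)"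
  using cyc_prod_carrier[of k "perturbed \<epsilon>" "\<lambda>j. n (j mod k)"] perturbed_carrier by simp

lemma continuous_on_perturbed_entry:
  "x < n j \<Longrightarrow> y < n (Suc j mod k) \<Longrightarrow> continuous_on UNIV (\<lambda>\<epsilon>. perturbed \<epsilon> j $$ (x, y))"
  by (cases "on_walk j x y") (auto simp: perturbed_def intro!: continuous_intros)

lemma perturbed_zero_walk_entry:
  assumes "y < n (Suc (fst (walk l)) mod k)"
  shows "perturbed 0 (fst (walk l)) $$ (snd (walk l), y) =
    (if y = snd (walk (Suc l)) then edge_sign l else 0)"
  using assms vert_walk[of l] by (auto simp: perturbed_def on_walk_iff edge_sign_def)

lemma visit_row_prefix:
  assumes "l \<le> k" "y < n (l mod k)"
  shows "cyc_prod (n 0) l (perturbed 0) $$ (visit a, y) =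
    (if y = snd (walk (a * k + l)) then prod edge_sign {a * k..<a * k + l} else 0)"
  using assms
proof (induction l arbitrary: y)
  case 0
  then show ?case
    using visit_lt by (auto simp: cyc_prod_def walk_visit)
next
  case (Suc l)
  define x where "x = snd (walk (a * k + l))"
  define w where "w = prod edge_sign {a * k..<a * k + l}"
  have l: "l < k"
    using Suc.prems by simp
  have walk_l: "walk (a * k + l) = (l, x)"
    using fst_walk[of "a * k + l"] l by (simp add: x_def prod_eq_iff)
  have x: "x < n l"
    using vert_walk[of "a * k + l"] walk_l by simp
  have IH: "cyc_prod (n 0) l (perturbed 0) $$ (visit a, t) = (if t = x then w else 0)" if "t < n l" for t
    using Suc.IH[of t] l that by (simp add: x_def w_def)
  have "cyc_prod (n 0) (Suc l) (perturbed 0) $$ (visit a, y) =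
      (\<Sum>t = 0..<n l. cyc_prod (n 0) l (perturbed 0) $$ (visit a, t) * perturbed 0 l $$ (t, y))"
    using cyc_prod_Suc_index[of l "perturbed 0" "\<lambda>j. n (j mod k)" "visit a" y]
      l Suc.prems(2) visit_lt perturbed_carrier by force
  also have "\<dots> = (\<Sum>t = 0..<n l. if t = x then w * perturbed 0 l $$ (x, y) else 0)"
    by (intro sum.cong) (auto simp: IH)
  also have "\<dots> = w * perturbed 0 l $$ (x, y)"
    using x by simp
  also have "perturbed 0 l $$ (x, y) = (if y = snd (walk (a * k + Suc l)) then edge_sign (a * k + l) else 0)"
    using perturbed_zero_walk_entry[where l = "a * k + l" and y = y] walk_l Suc.prems(2) by simp
  finally show ?case
    by (simp add: w_def)
qed

lemma visit_row:
  assumes "a < r" "b < r"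
  shows "cyc_prod (n 0) k (perturbed 0) $$ (visit a, visit b) =
    (if b = cyclic_shift r a then prod edge_sign {a * k..<a * k + k} else 0)"
proof -
  have "snd (walk (a * k + k)) = visit (cyclic_shift r a)"
    using walk_next_visit[OF assms(1)] walk_visit by simp
  moreover have "visit b = visit (cyclic_shift r a) \<longleftrightarrow> b = cyclic_shift r a"
    using inj_on_visit assms cyclic_shift_permutes[of r]
    by (metis inj_on_eq_iff lessThan_iff permutes_in_image)
  ultimately show ?thesis
    using visit_row_prefix[of k "visit b" a] visit_lt by simp
qed

lemma det_visits_minor_unperturbed:
  "det (submatrix (cyc_prod (n 0) k (perturbed 0)) visits visits) = -1"
proof -
  have "det (submatrix (cyc_prod (n 0) k (perturbed 0)) visits visits) =
      signof (cyclic_shift r) * (\<Prod>a<r. prod edge_sign {a * k..<a * k + k})"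
    unfolding visits_def
    using cyc_prod_perturbed_carrier inj_on_visit visit_lt cyclic_shift_permutes visit_row
    by (intro det_submatrix_monomial) auto
  also have "(\<Prod>a<r. prod edge_sign {a * k..<a * k + k}) = (-1) ^ neg_edges A c"
    using prod.nat_group[of edge_sign k r] prod_edge_sign length_eq by simp
  also have "signof (cyclic_shift r) = (-1::real) ^ (r - 1)"
    using sign_cyclic_shift[of "r - 1"] r_pos by simp
  also have "(-1::real) ^ (r - 1) * (-1) ^ neg_edges A c = -1"
  proof -
    have "(-1::int) ^ (r + neg_edges A c) = 1"
      using e_cycle by (simp add: is_e_cycle_def r_def)
    then have "even (r + neg_edges A c)"
      by (auto simp: minus_one_power_iff split: if_splits)
    then have "odd (r - 1 + neg_edges A c)"
      using r_pos by (cases r) auto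
    then show ?thesis
      by (simp add: power_add[symmetric] minus_one_power_iff)
  qed
  finally show ?thesis .
qed

lemma continuous_on_det_visits_minor:
  "continuous_on UNIV (\<lambda>\<epsilon>. det (submatrix (cyc_prod (n 0) k (perturbed \<epsilon>)) visits visits))"
  using cyc_prod_perturbed_carrier
proof (rule continuous_on_det_submatrix)
  fix i j assume "i < n 0" "j < n 0"
  then show "continuous_on UNIV (\<lambda>\<epsilon>. cyc_prod (n 0) k (perturbed \<epsilon>) $$ (i, j))"
    using continuous_on_cyc_prod_entry[of k perturbed "\<lambda>j. n (j mod k)" i j]
      perturbed_carrier continuous_on_perturbed_entry by force
qed

lemma exists_perturbed_negative_minor:
  "\<exists>\<epsilon>>0. det (submatrix (cyc_prod (n 0) k (perturbed \<epsilon>)) visits visits) < 0"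
proof -
  let ?f = "\<lambda>\<epsilon>. det (submatrix (cyc_prod (n 0) k (perturbed \<epsilon>)) visits visits)"
  have "isCont ?f 0"
    using continuous_on_det_visits_minor continuous_on_eq_continuous_at[OF open_UNIV] by blast
  then have "\<forall>\<^sub>F \<epsilon> in at 0. ?f \<epsilon> < 0"
    using det_visits_minor_unperturbed by (auto dest!: isContD intro: order_tendstoD(2))
  then obtain d :: real where "0 < d" "\<And>\<epsilon>. \<epsilon> \<noteq> 0 \<Longrightarrow> dist \<epsilon> 0 < d \<Longrightarrow> ?f \<epsilon> < 0"
    unfolding eventually_at by blast
  then show ?thesis
    by (intro exI[of _ "d / 2"]) simp
qed

end

theorem corollary6:
  fixes k :: nat and n :: "nat \<Rightarrow> nat" and A :: "nat \<Rightarrow> real mat"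
  assumes "k \<ge> 1"
    and "\<forall>j < k. n j \<ge> 1"
    and "\<forall>j < k. A j \<in> carrier_mat (n j) (n ((j + 1) mod k))"
    and "\<exists>c. is_e_cycle k n A c"
  shows "\<exists>B. (\<forall>j < k. B j \<in> qual_class (A j)) \<and> \<not> P0_matrix (cyc_prod (n 0) k B)"
proof -
  obtain c where "is_e_cycle k n A c"
    using assms(4) by blast
  then interpret e_cycle k n A c
    using assms(1,3) by unfold_locales auto
  obtain \<epsilon> where "0 < \<epsilon>" and neg: "det (submatrix (cyc_prod (n 0) k (perturbed \<epsilon>)) visits visits) < 0"
    using exists_perturbed_negative_minor by blast
  have "visits \<subseteq> {0..<dim_row (cyc_prod (n 0) k (perturbed \<epsilon>))}"
    using carrier_matD(1)[OF cyc_prod_perturbed_carrier] visit_lt by (auto simp: visits_def)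
  then have "\<not> P0_matrix (cyc_prod (n 0) k (perturbed \<epsilon>))"
    using neg unfolding P0_matrix_def by (meson not_le)
  then show ?thesis
    using \<open>0 < \<epsilon>\<close> perturbed_qual_class by blast
qed

end
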